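(* Let $\mathcal{C}$ be a class of formal languages closed under unions and under inverse images of monoid homomorphisms. Let $N$ and $Q$ be finitely generated groups, let $G$ be a group and let $f\colon G\to Q$ be a surjective homomorphism with kernel $N$ (so $G$ is an extension of $N$ by $Q$). Let $P_N\subseteq N$ and $P_Q\subseteq Q$ be $\mathcal{C}$-positive cones of $N$ and $Q$ respectively. Then $f^{-1}(P_Q)\cup P_N$ is a $\mathcal{C}$-positive cone of $G$. In particular, this holds when $\mathcal{C}$ is any full abstract family of languages, such as the class of regular languages, the class of one-counter languages or the class of context-free languages.
   Context: A positive cone of a group $H$ is a subsemigroup $P\subseteq H$ with $H=P\sqcup P^{-1}\sqcup\{1_H\}$ (disjoint union); positive cones correspond to left-orders via $a\prec b\iff a^{-1}b\in P$. A finite generating set of a group $H$ is a finite set $X$ together with a surjective monoid homomorphism $\pi\colon X^*\to H$ from the free monoid on $X$. For a class $\mathcal{C}$ of formal languages, a positive cone $P$ of a finitely generated group $H$ is a $\mathcal{C}$-positive cone if there is a finite generating set $(X,\pi)$ of $H$ and a language $\mathcal{L}\subseteq X^*$ in $\mathcal{C}$ with $\pi(\mathcal{L})=P$. A full abstract family of languages (full AFL) is a class of languages closed under monoid homomorphisms, inverse monoid homomorphisms, intersection with regular languages, unions, concatenation and Kleene closure. A one-counter language is one accepted by a nondeterministic pushdown automaton whose stack alphabet consists of a single symbol. *)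

theory Defs
  imports "HOL-Algebra.Algebra"
begin

(* Letters of all alphabets are drawn from nat; a language is a set of words (nat lists)
   over some finite alphabet. A class of languages is a set of such languages. *)

definition language_class :: "nat list set set \<Rightarrow> bool" where
  "language_class C \<longleftrightarrow> (\<forall>L\<in>C. \<exists>S. finite S \<and> L \<subseteq> lists S)"

definition closed_under_unions :: "nat list set set \<Rightarrow> bool" where
  "closed_under_unions C \<longleftrightarrow> (\<forall>L1\<in>C. \<forall>L2\<in>C. L1 \<union> L2 \<in> C)"

(* a monoid homomorphism h : Y^* \<rightarrow> Sigma^* is determined by the images g y of the letters:
   h w = concat (map g w); its inverse image of L is the set of words over Y mapped into L *)
definition closed_under_inverse_homs :: "nat list set set \<Rightarrow> bool" where
  "closed_under_inverse_homs C \<longleftrightarrow>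
     (\<forall>L\<in>C. \<forall>Y (g :: nat \<Rightarrow> nat list). finite Y \<longrightarrow>
        {w \<in> lists Y. concat (map g w) \<in> L} \<in> C)"

definition word_eval :: "('g, 'b) monoid_scheme \<Rightarrow> (nat \<Rightarrow> 'g) \<Rightarrow> nat list \<Rightarrow> 'g" where
  "word_eval H e w = foldr (\<lambda>x acc. e x \<otimes>\<^bsub>H\<^esub> acc) w \<one>\<^bsub>H\<^esub>"

definition fin_gen_group :: "('g, 'b) monoid_scheme \<Rightarrow> bool" where
  "fin_gen_group H \<longleftrightarrow> group H \<and> (\<exists>A. finite A \<and> A \<subseteq> carrier H \<and> generate H A = carrier H)"

definition positive_cone :: "('g, 'b) monoid_scheme \<Rightarrow> 'g set \<Rightarrow> bool" where
  "positive_cone H P \<longleftrightarrow>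
     P \<subseteq> carrier H \<and>
     (\<forall>a\<in>P. \<forall>b\<in>P. a \<otimes>\<^bsub>H\<^esub> b \<in> P) \<and>
     carrier H = P \<union> (m_inv H) ` P \<union> {\<one>\<^bsub>H\<^esub>} \<and>
     P \<inter> (m_inv H) ` P = {} \<and> \<one>\<^bsub>H\<^esub> \<notin> P \<and> \<one>\<^bsub>H\<^esub> \<notin> (m_inv H) ` P"

definition fin_gen_set :: "('g, 'b) monoid_scheme \<Rightarrow> nat set \<Rightarrow> (nat \<Rightarrow> 'g) \<Rightarrow> bool" where
  "fin_gen_set H S e \<longleftrightarrow> finite S \<and> e ` S \<subseteq> carrier H \<and> word_eval H e ` lists S = carrier H"

definition C_positive_cone :: "nat list set set \<Rightarrow> ('g, 'b) monoid_scheme \<Rightarrow> 'g set \<Rightarrow> bool" where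
  "C_positive_cone C H P \<longleftrightarrow> positive_cone H P \<and>
     (\<exists>S e L. fin_gen_set H S e \<and> L \<in> C \<and> L \<subseteq> lists S \<and> word_eval H e ` L = P)"

end

theory Submission
  imports Defs
begin

(* The cone is lexicographic: g is positive if f g is positive in Q, or if f g = 1 and g is
   positive in N.  Splitting on whether f x = 1 reduces closure and trichotomy in G to those
   in Q and in N.
   For the language, generate G by the generators of N together with preimages of the
   generators of Q.  Erasing the N-letters is a monoid homomorphism of words compatible with f,
   and every g is represented by a word over any given word u for f g: spell u with the lifted
   letters and correct by a word for the kernel element that remains.  Hence f^-1(P_Q) is the
   image of the inverse image of L_Q, P_N is the image of a renamed copy of L_N, and both
   languages, as well as their union, lie in C. *)

lemma (in group) positive_cone_iff:
  "positive_cone G P \<longleftrightarrow>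
     P \<subseteq> carrier G \<and> (\<forall>a\<in>P. \<forall>b\<in>P. a \<otimes> b \<in> P) \<and> \<one> \<notin> P \<and>
     (\<forall>x \<in> carrier G - {\<one>}. x \<in> P \<longleftrightarrow> inv x \<notin> P)"
proof
  assume cone: "positive_cone G P"
  then have P: "P \<subseteq> carrier G" and mult: "\<forall>a\<in>P. \<forall>b\<in>P. a \<otimes> b \<in> P"
    and one: "\<one> \<notin> P" and cover: "carrier G = P \<union> m_inv G ` P \<union> {\<one>}"
    and disjoint: "P \<inter> m_inv G ` P = {}"
    unfolding positive_cone_def by blast+
  have trichotomy: "x \<in> P \<longleftrightarrow> inv x \<notin> P" if x: "x \<in> carrier G - {\<one>}" for x
  proof -
    have "x \<notin> P \<inter> m_inv G ` P" using disjoint by blast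
    then have "\<not> (x \<in> P \<and> inv x \<in> P)" using x by (metis DiffD1 IntI image_eqI inv_inv)
    moreover have "x \<in> P \<union> m_inv G ` P" using x cover by blast
    ultimately show ?thesis using x P by auto
  qed
  show "P \<subseteq> carrier G \<and> (\<forall>a\<in>P. \<forall>b\<in>P. a \<otimes> b \<in> P) \<and> \<one> \<notin> P \<and>
     (\<forall>x \<in> carrier G - {\<one>}. x \<in> P \<longleftrightarrow> inv x \<notin> P)"
    using P mult one trichotomy by blast
next
  assume "P \<subseteq> carrier G \<and> (\<forall>a\<in>P. \<forall>b\<in>P. a \<otimes> b \<in> P) \<and> \<one> \<notin> P \<and>
     (\<forall>x \<in> carrier G - {\<one>}. x \<in> P \<longleftrightarrow> inv x \<notin> P)"
  then have P: "P \<subseteq> carrier G" and mult: "\<forall>a\<in>P. \<forall>b\<in>P. a \<otimes> b \<in> P" and one: "\<one> \<notin> P"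
    and tri: "\<forall>x \<in> carrier G - {\<one>}. x \<in> P \<longleftrightarrow> inv x \<notin> P" by blast+
  have "carrier G = P \<union> m_inv G ` P \<union> {\<one>}"
  proof (intro equalityI subsetI)
    fix x assume "x \<in> P \<union> m_inv G ` P \<union> {\<one>}"
    then show "x \<in> carrier G" using P by auto
  next
    fix x assume x: "x \<in> carrier G"
    show "x \<in> P \<union> m_inv G ` P \<union> {\<one>}"
    proof (cases "x = \<one> \<or> x \<in> P")
      case False
      then have "inv x \<in> P" using x tri by blast
      then show ?thesis using x by (metis UnI1 UnI2 image_eqI inv_inv)
    qed blast
  qed
  moreover have "P \<inter> m_inv G ` P = {}"
  proof (rule equals0I)
    fix x assume "x \<in> P \<inter> m_inv G ` P"
    then obtain y where "x \<in> P" "y \<in> P" "x = inv y" by blast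
    moreover have "y \<in> carrier G - {\<one>}" using \<open>y \<in> P\<close> P one by blast
    ultimately show False using tri by blast
  qed
  moreover have "\<one> \<notin> m_inv G ` P"
  proof
    assume "\<one> \<in> m_inv G ` P"
    then obtain y where "y \<in> P" "inv y = \<one>" by (metis imageE)
    then show False using P one by (metis inv_eq_1_iff subsetD)
  qed
  ultimately show "positive_cone G P" using P mult one unfolding positive_cone_def by blast
qed

lemma (in group) subgroup_positive_cone_iff:
  assumes "subgroup K G"
  shows "positive_cone (G\<lparr>carrier := K\<rparr>) P \<longleftrightarrow>
     P \<subseteq> K \<and> (\<forall>a\<in>P. \<forall>b\<in>P. a \<otimes> b \<in> P) \<and> \<one> \<notin> P \<and>
     (\<forall>x \<in> K - {\<one>}. x \<in> P \<longleftrightarrow> inv x \<notin> P)"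
  using group.positive_cone_iff[OF subgroup.subgroup_is_group[OF assms is_group]] assms
  by simp

lemma mem_kernel_iff: "x \<in> kernel G H h \<longleftrightarrow> x \<in> carrier G \<and> h x = \<one>\<^bsub>H\<^esub>"
  by (simp add: kernel_def)

lemma (in group_hom) positive_cone_extension:
  assumes cone_N: "positive_cone (G\<lparr>carrier := kernel G H h\<rparr>) PN"
    and cone_H: "positive_cone H PH"
  shows "positive_cone G ((h -` PH \<inter> carrier G) \<union> PN)"
proof -
  define P where "P = (h -` PH \<inter> carrier G) \<union> PN"
  have N: "PN \<subseteq> kernel G H h" "\<forall>a\<in>PN. \<forall>b\<in>PN. a \<otimes> b \<in> PN" "\<one> \<notin> PN"
    "\<forall>x \<in> kernel G H h - {\<one>}. x \<in> PN \<longleftrightarrow> inv x \<notin> PN"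
    using cone_N unfolding G.subgroup_positive_cone_iff[OF subgroup_kernel] by blast+
  have Q: "PH \<subseteq> carrier H" "\<forall>a\<in>PH. \<forall>b\<in>PH. a \<otimes>\<^bsub>H\<^esub> b \<in> PH" "\<one>\<^bsub>H\<^esub> \<notin> PH"
    "\<forall>y \<in> carrier H - {\<one>\<^bsub>H\<^esub>}. y \<in> PH \<longleftrightarrow> inv\<^bsub>H\<^esub> y \<notin> PH"
    using cone_H unfolding H.positive_cone_iff by blast+
  have PN_h: "a \<in> carrier G \<and> h a = \<one>\<^bsub>H\<^esub>" if "a \<in> PN" for a
    using that N(1) by (auto simp: mem_kernel_iff)
  have P_iff: "x \<in> P \<longleftrightarrow> (if h x = \<one>\<^bsub>H\<^esub> then x \<in> PN else h x \<in> PH)" if "x \<in> carrier G" for x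
    using that Q(3) PN_h by (auto simp: P_def)
  have "P \<subseteq> carrier G" using PN_h by (auto simp: P_def)
  moreover have "a \<otimes> b \<in> P" if ab: "a \<in> P" "b \<in> P" for a b
  proof -
    have ab_G: "a \<in> carrier G" "b \<in> carrier G" using ab \<open>P \<subseteq> carrier G\<close> by auto
    consider "a \<in> PN" "b \<in> PN" | "a \<in> PN" "h b \<in> PH" | "h a \<in> PH" "b \<in> PN"
      | "h a \<in> PH" "h b \<in> PH"
      using ab by (auto simp: P_def)
    then show ?thesis
      using ab_G N(2) Q(1,2) PN_h by cases (auto simp: P_def subsetD)
  qed
  moreover have "\<one> \<notin> P" using N(3) Q(3) by (auto simp: P_def)
  moreover have "x \<in> P \<longleftrightarrow> inv x \<notin> P" if x: "x \<in> carrier G - {\<one>}" for x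
  proof (cases "h x = \<one>\<^bsub>H\<^esub>")
    case True
    then have "x \<in> kernel G H h - {\<one>}" using x by (simp add: mem_kernel_iff)
    moreover have "x \<in> P \<longleftrightarrow> x \<in> PN" and "inv x \<in> P \<longleftrightarrow> inv x \<in> PN"
      using x True P_iff by simp_all
    ultimately show ?thesis using N(4) by blast
  next
    case False
    then have "h x \<in> carrier H - {\<one>\<^bsub>H\<^esub>}" using x by simp
    moreover have "x \<in> P \<longleftrightarrow> h x \<in> PH" and "inv x \<in> P \<longleftrightarrow> inv\<^bsub>H\<^esub> h x \<in> PH"
      using x False P_iff by simp_all
    ultimately show ?thesis using Q(4) by blast
  qed
  ultimately show ?thesis unfolding P_def[symmetric] G.positive_cone_iff by blast
qed

lemma word_eval_Nil [simp]: "word_eval H e [] = \<one>\<^bsub>H\<^esub>"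
  by (simp add: word_eval_def)

lemma word_eval_Cons [simp]: "word_eval H e (x # w) = e x \<otimes>\<^bsub>H\<^esub> word_eval H e w"
  by (simp add: word_eval_def)

lemma word_eval_carrier_update [simp]: "word_eval (H\<lparr>carrier := K\<rparr>) e = word_eval H e"
  by (simp add: word_eval_def fun_eq_iff)

lemma word_eval_cong: "(\<And>x. x \<in> set w \<Longrightarrow> e x = e' x) \<Longrightarrow> word_eval H e w = word_eval H e' w"
  by (induction w) auto

lemma word_eval_map: "word_eval H e (map h w) = word_eval H (e \<circ> h) w"
  by (induction w) auto

lemma (in monoid) word_eval_closed: "e ` set w \<subseteq> carrier G \<Longrightarrow> word_eval G e w \<in> carrier G"
  by (induction w) auto

lemma (in monoid) word_eval_append:
  assumes "e ` set u \<subseteq> carrier G" and "e ` set v \<subseteq> carrier G"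
  shows "word_eval G e (u @ v) = word_eval G e u \<otimes> word_eval G e v"
  using assms by (induction u) (auto simp: m_assoc word_eval_closed)

lemma (in monoid) word_eval_concat_map:
  assumes "e ` set (concat (map \<phi> w)) \<subseteq> carrier G"
  shows "word_eval G e (concat (map \<phi> w)) = word_eval G (\<lambda>x. word_eval G e (\<phi> x)) w"
  using assms by (induction w) (auto simp: word_eval_append image_Un)

lemma (in group_hom) hom_word_eval:
  "e ` set w \<subseteq> carrier G \<Longrightarrow> h (word_eval G e w) = word_eval H (h \<circ> e) w"
  by (induction w) (auto simp: G.word_eval_closed)

lemma lists_vimage_map_eq_image:
  assumes "\<And>x. x \<in> S \<Longrightarrow> g (h x) = x" and "L \<subseteq> lists S"
  shows "{w \<in> lists (h ` S). map g w \<in> L} = map h ` L"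
proof (intro equalityI subsetI)
  fix w assume w: "w \<in> {w \<in> lists (h ` S). map g w \<in> L}"
  then have "map h (map g w) = w" using assms(1) by (auto intro!: map_idI)
  moreover have "map g w \<in> L" using w by blast
  ultimately show "w \<in> map h ` L" using imageI[of "map g w" L "map h"] by simp
next
  fix w assume "w \<in> map h ` L"
  then obtain u where u: "u \<in> L" "w = map h u" by blast
  then have "u \<in> lists S" using assms(2) by blast
  moreover have "map g (map h u) = u" using \<open>u \<in> lists S\<close> assms(1) by (auto intro!: map_idI)
  ultimately show "w \<in> {w \<in> lists (h ` S). map g w \<in> L}" using u by auto
qed

locale extension_generators = group_hom G Q f
  for G (structure) and Q (structure) and f +
  fixes SN :: "nat set" and eN :: "nat \<Rightarrow> 'a"
    and SQ :: "nat set" and eQ :: "nat \<Rightarrow> 'c"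
  assumes surjective: "f ` carrier G = carrier Q"
    and kernel_gens: "fin_gen_set (G\<lparr>carrier := kernel G Q f\<rparr>) SN eN"
    and quotient_gens: "fin_gen_set Q SQ eQ"
begin

(* Letter 2n stands for the n-th generator of the kernel, letter 2n+1 for a preimage of the
   n-th generator of Q; quotient_word erases the kernel letters. *)

definition letters :: "nat set" where
  "letters = (\<lambda>n. 2 * n) ` SN \<union> (\<lambda>n. 2 * n + 1) ` SQ"

definition gen :: "nat \<Rightarrow> 'a" where
  "gen x = (if even x then eN (x div 2) else inv_into (carrier G) f (eQ (x div 2)))"

definition quotient_word :: "nat \<Rightarrow> nat list" where
  "quotient_word x = (if even x then [] else [x div 2])"

lemma kernel_word_eval: "word_eval G eN ` lists SN = kernel G Q f"
  using kernel_gens by (simp add: fin_gen_set_def)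

lemma kernel_gen_closed: "n \<in> SN \<Longrightarrow> eN n \<in> kernel G Q f"
  using kernel_gens by (auto simp: fin_gen_set_def)

lemma quotient_gen_closed: "n \<in> SQ \<Longrightarrow> eQ n \<in> carrier Q"
  using quotient_gens by (auto simp: fin_gen_set_def)

lemma lift_closed: "q \<in> carrier Q \<Longrightarrow> inv_into (carrier G) f q \<in> carrier G"
  using surjective by (metis inv_into_into)

lemma f_lift: "q \<in> carrier Q \<Longrightarrow> f (inv_into (carrier G) f q) = q"
  using surjective by (metis f_inv_into_f)

lemma gen_closed: "x \<in> letters \<Longrightarrow> gen x \<in> carrier G"
  using kernel_gen_closed quotient_gen_closed lift_closed
  by (auto simp: letters_def gen_def mem_kernel_iff)

lemma word_eval_gen_closed: "w \<in> lists letters \<Longrightarrow> word_eval G gen w \<in> carrier G"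
  using gen_closed by (auto intro: G.word_eval_closed)

lemma word_eval_gen_double: "word_eval G gen (map (\<lambda>n. 2 * n) u) = word_eval G eN u"
  by (simp add: word_eval_map comp_def gen_def)

lemma f_word_eval_gen:
  assumes "w \<in> lists letters"
  shows "f (word_eval G gen w) = word_eval Q eQ (concat (map quotient_word w))"
proof -
  have f_gen: "(f \<circ> gen) x = word_eval Q eQ (quotient_word x)" if "x \<in> letters" for x
    using that kernel_gen_closed quotient_gen_closed f_lift
    by (auto simp: letters_def gen_def quotient_word_def mem_kernel_iff)
  have "f (word_eval G gen w) = word_eval Q (f \<circ> gen) w"
    using assms gen_closed by (auto intro!: hom_word_eval)
  also have "\<dots> = word_eval Q (\<lambda>x. word_eval Q eQ (quotient_word x)) w"
    using assms f_gen by (auto intro: word_eval_cong)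
  also have "\<dots> = word_eval Q eQ (concat (map quotient_word w))"
    using assms quotient_gen_closed
    by (intro H.word_eval_concat_map[symmetric]) (auto simp: letters_def quotient_word_def)
  finally show ?thesis .
qed

lemma finite_letters: "finite letters"
proof -
  have "finite SN" "finite SQ" using kernel_gens quotient_gens unfolding fin_gen_set_def by blast+
  then show ?thesis by (simp add: letters_def)
qed

lemma lift_quotient_word:
  assumes g: "g \<in> carrier G" and u: "u \<in> lists SQ" "word_eval Q eQ u = f g"
  shows "\<exists>w \<in> lists letters. concat (map quotient_word w) = u \<and> word_eval G gen w = g"
proof -
  define ut where "ut = map (\<lambda>n. 2 * n + 1) u"
  have ut: "ut \<in> lists letters" "concat (map quotient_word ut) = u"
    using u(1) by (auto simp: ut_def letters_def quotient_word_def comp_def)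
  define h where "h = word_eval G gen ut"
  have h: "h \<in> carrier G" "f h = f g"
    using ut u(2) word_eval_gen_closed f_word_eval_gen by (simp_all add: h_def)
  define k where "k = inv h \<otimes> g"
  have "k \<in> kernel G Q f" using h g by (simp add: k_def mem_kernel_iff)
  then obtain v where v: "v \<in> lists SN" "word_eval G eN v = k"
    using kernel_word_eval by (metis imageE)
  define vt where "vt = map (\<lambda>n. 2 * n) v"
  have vt: "vt \<in> lists letters" "concat (map quotient_word vt) = []" "word_eval G gen vt = k"
    using v by (auto simp: vt_def letters_def quotient_word_def word_eval_gen_double)
  have "word_eval G gen (ut @ vt) = h \<otimes> k"
    using ut(1) vt(1) gen_closed by (subst G.word_eval_append) (auto simp: h_def vt(3))
  also have "\<dots> = g" using h g by (simp add: k_def G.m_assoc[symmetric])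
  finally show ?thesis using ut vt by (intro bexI[of _ "ut @ vt"]) auto
qed

lemma fin_gen_set_letters: "fin_gen_set G letters gen"
proof -
  have "carrier G \<subseteq> word_eval G gen ` lists letters"
  proof
    fix g assume g: "g \<in> carrier G"
    then have "f g \<in> word_eval Q eQ ` lists SQ" using quotient_gens unfolding fin_gen_set_def by simp
    then obtain u where "u \<in> lists SQ" "word_eval Q eQ u = f g" by (metis imageE)
    then show "g \<in> word_eval G gen ` lists letters" using g lift_quotient_word by blast
  qed
  moreover have "word_eval G gen ` lists letters \<subseteq> carrier G" using word_eval_gen_closed by blast
  ultimately show ?thesis
    using finite_letters gen_closed unfolding fin_gen_set_def by blast
qed

lemma word_eval_gen_kernel_language:
  assumes "LN \<subseteq> lists SN"
  shows "word_eval G gen ` {w \<in> lists ((\<lambda>n. 2 * n) ` SN). concat (map (\<lambda>x. [x div 2]) w) \<in> LN}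
    = word_eval G eN ` LN"
  using lists_vimage_map_eq_image[of SN "\<lambda>x. x div 2" "\<lambda>n. 2 * n", OF _ assms]
  by (simp add: image_image word_eval_gen_double)

lemma word_eval_gen_quotient_language:
  assumes "LQ \<subseteq> lists SQ"
  shows "word_eval G gen ` {w \<in> lists letters. concat (map quotient_word w) \<in> LQ}
    = f -` word_eval Q eQ ` LQ \<inter> carrier G"
proof (intro equalityI subsetI)
  fix g assume "g \<in> word_eval G gen ` {w \<in> lists letters. concat (map quotient_word w) \<in> LQ}"
  then show "g \<in> f -` word_eval Q eQ ` LQ \<inter> carrier G"
    using word_eval_gen_closed f_word_eval_gen by auto
next
  fix g assume "g \<in> f -` word_eval Q eQ ` LQ \<inter> carrier G"
  then obtain u where u: "u \<in> LQ" "word_eval Q eQ u = f g" and g: "g \<in> carrier G" by auto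
  then obtain w where "w \<in> lists letters" "concat (map quotient_word w) = u" "word_eval G gen w = g"
    using assms lift_quotient_word by blast
  then show "g \<in> word_eval G gen ` {w \<in> lists letters. concat (map quotient_word w) \<in> LQ}"
    using u by blast
qed

lemma extension_language:
  assumes C: "closed_under_unions C" "closed_under_inverse_homs C"
    and LN: "LN \<in> C" "LN \<subseteq> lists SN" and LQ: "LQ \<in> C" "LQ \<subseteq> lists SQ"
  shows "\<exists>L \<in> C. L \<subseteq> lists letters \<and>
    word_eval G gen ` L = (f -` word_eval Q eQ ` LQ \<inter> carrier G) \<union> word_eval G eN ` LN"
proof -
  define lifted_LQ where "lifted_LQ = {w \<in> lists letters. concat (map quotient_word w) \<in> LQ}"
  define renamed_LN where
    "renamed_LN = {w \<in> lists ((\<lambda>n. 2 * n) ` SN). concat (map (\<lambda>x. [x div 2]) w) \<in> LN}"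
  have "finite ((\<lambda>n. 2 * n) ` SN)" using kernel_gens by (simp add: fin_gen_set_def)
  then have "lifted_LQ \<in> C" "renamed_LN \<in> C"
    using C(2) LN(1) LQ(1) finite_letters
    unfolding closed_under_inverse_homs_def lifted_LQ_def renamed_LN_def by blast+
  then have "lifted_LQ \<union> renamed_LN \<in> C" using C(1) by (simp add: closed_under_unions_def)
  moreover have "lifted_LQ \<union> renamed_LN \<subseteq> lists letters"
    by (auto simp: lifted_LQ_def renamed_LN_def letters_def)
  moreover have "word_eval G gen ` (lifted_LQ \<union> renamed_LN) =
      (f -` word_eval Q eQ ` LQ \<inter> carrier G) \<union> word_eval G eN ` LN"
    using word_eval_gen_kernel_language[OF LN(2)] word_eval_gen_quotient_language[OF LQ(2)]
    by (simp add: image_Un lifted_LQ_def renamed_LN_def)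
  ultimately show ?thesis by blast
qed

end

theorem proposition3p3:
  fixes C :: "nat list set set"
    and G :: "('g, 'b) monoid_scheme"
    and Q :: "('q, 'c) monoid_scheme"
    and f :: "'g \<Rightarrow> 'q"
    and PN :: "'g set" and PQ :: "'q set"
  assumes "language_class C"
    and "closed_under_unions C"
    and "closed_under_inverse_homs C"
    and "group G" and "group Q"
    and "f \<in> hom G Q" and "f ` carrier G = carrier Q"
    and "fin_gen_group (G\<lparr>carrier := kernel G Q f\<rparr>)"
    and "fin_gen_group Q"
    and "C_positive_cone C (G\<lparr>carrier := kernel G Q f\<rparr>) PN"
    and "C_positive_cone C Q PQ"
  shows "C_positive_cone C G ((f -` PQ \<inter> carrier G) \<union> PN)"
proof -
  interpret group_hom G Q f
    using assms(4-6) by (simp add: group_hom_def group_hom_axioms_def)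
  obtain SN eN LN where cone_N: "positive_cone (G\<lparr>carrier := kernel G Q f\<rparr>) PN"
    and gens_N: "fin_gen_set (G\<lparr>carrier := kernel G Q f\<rparr>) SN eN"
    and LN: "LN \<in> C" "LN \<subseteq> lists SN" "word_eval G eN ` LN = PN"
    using assms(10) unfolding C_positive_cone_def by auto
  obtain SQ eQ LQ where cone_Q: "positive_cone Q PQ" and gens_Q: "fin_gen_set Q SQ eQ"
    and LQ: "LQ \<in> C" "LQ \<subseteq> lists SQ" "word_eval Q eQ ` LQ = PQ"
    using assms(11) unfolding C_positive_cone_def by auto
  interpret extension_generators G Q f SN eN SQ eQ
    using assms(7) gens_N gens_Q by unfold_locales
  obtain L where "L \<in> C" "L \<subseteq> lists letters"
    "word_eval G gen ` L = (f -` PQ \<inter> carrier G) \<union> PN"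
    using extension_language[OF assms(2,3) LN(1,2) LQ(1,2)] LN(3) LQ(3) by blast
  then show ?thesis
    using positive_cone_extension[OF cone_N cone_Q] fin_gen_set_letters
    unfolding C_positive_cone_def by blast
qed

end
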